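(* Let $\Psi=(\psi_k)_{k\in\mathbb N}$ with $\psi_k\in(-\pi/2,\pi/2)$, let $F_n=i\tan(\psi_{|n|})$ for $n\in\mathbb Z$, let $d\ge1$, and let $G_d(z)=\begin{pmatrix}a(z)&b(z)\\-b^*(z)&a^*(z)\end{pmatrix}$ be the $SU(2)$ nonlinear Fourier series of the sequence $(F_n\mathbf 1_{\{-d\le n\le d\}})_{n\in\mathbb Z}$. For $x\in[0,1]$ let $\theta\in[0,\pi/2]$ be the unique number with $\cos\theta=x$ and set $z=e^{2i\theta}$. Then $$i\,\operatorname{Im}(u_d(\Psi,x))=b(z).$$
   Context: For a function $a$ on a subset of the Riemann sphere, $a^*(z)=\overline{a(\overline{z}^{-1})}$. $W(x)=\begin{pmatrix}x& i\sqrt{1-x^2}\\ i\sqrt{1-x^2}& x\end{pmatrix}$, $Z=\begin{pmatrix}1&0\\0&-1\end{pmatrix}$; $U_0(\Psi,x)=e^{i\psi_0Z}$, $U_d(\Psi,x)=e^{i\psi_dZ}W(x)U_{d-1}(\Psi,x)W(x)e^{i\psi_dZ}$ for $d\ge1$; $u_d(\Psi,x)$ is the upper left entry of $U_d(\Psi,x)$. For a finitely supported sequence $F:\mathbb Z\to\mathbb C$ its $SU(2)$ nonlinear Fourier series is $G(z)=\prod_k(1+|F_k|^2)^{-1/2}\begin{pmatrix}1&F_kz^k\\-\overline{F_k}z^{-k}&1\end{pmatrix}$, product ordered with $k$ increasing from left to right; it has the form $\begin{pmatrix}a&b\\-b^*&a^*\end{pmatrix}$. *)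

theory Defs
  imports "HOL-Analysis.Analysis"
begin

type_synonym cmat2 = "complex^2^2"

definition mat2 :: "complex \<Rightarrow> complex \<Rightarrow> complex \<Rightarrow> complex \<Rightarrow> cmat2" where
  "mat2 a b c d = (\<chi> i j. if i = 1 then (if j = 1 then a else b) else (if j = 1 then c else d))"

definition Wm :: "real \<Rightarrow> cmat2" where
  "Wm x = mat2 (complex_of_real x) (\<i> * complex_of_real (sqrt (1 - x^2)))
               (\<i> * complex_of_real (sqrt (1 - x^2))) (complex_of_real x)"

definition expiZ :: "real \<Rightarrow> cmat2" where
  "expiZ psi = mat2 (exp (\<i> * complex_of_real psi)) 0 0 (exp (- \<i> * complex_of_real psi))"

fun Um :: "(nat \<Rightarrow> real) \<Rightarrow> nat \<Rightarrow> real \<Rightarrow> cmat2" where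
  "Um Psi 0 x = expiZ (Psi 0)"
| "Um Psi (Suc d) x = expiZ (Psi (Suc d)) ** Wm x ** Um Psi d x ** Wm x ** expiZ (Psi (Suc d))"

definition u_entry :: "(nat \<Rightarrow> real) \<Rightarrow> nat \<Rightarrow> real \<Rightarrow> complex" where
  "u_entry Psi d x = Um Psi d x $ 1 $ 1"

definition nlfs_factor :: "(int \<Rightarrow> complex) \<Rightarrow> complex \<Rightarrow> int \<Rightarrow> cmat2" where
  "nlfs_factor F z k =
     (1 / sqrt (1 + (cmod (F k))^2)) *\<^sub>R
       mat2 1 (F k * z powi k) (- cnj (F k) * z powi (-k)) 1"

text \<open>Ordered product (k increasing left to right) over the window [-N, N]\<close>
definition nlfs_window :: "(int \<Rightarrow> complex) \<Rightarrow> nat \<Rightarrow> complex \<Rightarrow> cmat2" where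
  "nlfs_window F N z = foldr (\<lambda>k M. nlfs_factor F z k ** M) [- int N .. int N] (mat 1)"

text \<open>SU(2) nonlinear Fourier series of a finitely supported F: product over all k;
  factors outside the support are the identity, so take the least symmetric window containing the support.\<close>
definition nlfs :: "(int \<Rightarrow> complex) \<Rightarrow> complex \<Rightarrow> cmat2" where
  "nlfs F z = nlfs_window F (LEAST N. \<forall>k. F k \<noteq> 0 \<longrightarrow> \<bar>k\<bar> \<le> int N) z"

end

theory Submission
  imports Defs
begin

(* Conjugation by the Hadamard matrix H exchanges e^{i a Z} and e^{i a X}, and
   W(cos theta) = e^{i theta X} for theta in [0, pi/2], so
   V_d := H U_d(cos theta) H obeys V_d = e^{i psi_d X} e^{i theta Z} V_{d-1} e^{i theta Z} e^{i psi_d X}.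
   At z = e^{2 i theta} the k-th factor of the nonlinear Fourier series of F_k = i tan psi_|k|
   is e^{i k theta Z} e^{i psi_|k| X} e^{-i k theta Z}, so the ordered product over [-d, d]
   telescopes to e^{-i d theta Z} V_d e^{-i d theta Z}, whose upper right entry is that of V_d.
   Finally U_d is symmetric and of the form [a, b; -conj b, conj a], so the upper right entry
   of H U_d H is (a - conj a)/2 = i Im a. *)

lemma mat2_nth [simp]:
  "mat2 a b c d $ 1 $ 1 = a" "mat2 a b c d $ 1 $ 2 = b"
  "mat2 a b c d $ 2 $ 1 = c" "mat2 a b c d $ 2 $ 2 = d"
  by (simp_all add: mat2_def)

lemma mat2_entries: "(M::cmat2) = mat2 (M$1$1) (M$1$2) (M$2$1) (M$2$2)"
  by (simp add: vec_eq_iff forall_2 mat2_def)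

lemma mat2_mult:
  "mat2 a b c d ** mat2 e f g h = mat2 (a*e + b*g) (a*f + b*h) (c*e + d*g) (c*f + d*h)"
  by (simp add: vec_eq_iff forall_2 matrix_matrix_mult_def sum_2)

lemma mat_1_eq_mat2: "(mat 1 :: cmat2) = mat2 1 0 0 1"
  by (simp add: vec_eq_iff forall_2 mat_def mat2_def)

lemma scaleR_mat2: "r *\<^sub>R mat2 a b c d = mat2 (r *\<^sub>R a) (r *\<^sub>R b) (r *\<^sub>R c) (r *\<^sub>R d)"
  by (simp add: vec_eq_iff forall_2)

lemma transpose_mat2: "transpose (mat2 a b c d) = mat2 a c b d"
  by (simp add: vec_eq_iff forall_2 transpose_def mat2_def)

lemma expiZ_mult_expiZ: "expiZ a ** expiZ b = expiZ (a + b)"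
  by (simp add: expiZ_def mat2_mult mult_exp_exp algebra_simps)

lemma matrix_mul_expiZ_expiZ: "M ** expiZ a ** expiZ b = M ** expiZ (a + b)"
  by (simp flip: matrix_mul_assoc add: expiZ_mult_expiZ)

lemma expiZ_0: "expiZ 0 = mat 1"
  by (simp add: expiZ_def mat_1_eq_mat2)

lemma expiZ_sandwich_entry_12: "(expiZ a ** M ** expiZ a) $ 1 $ 2 = M $ 1 $ 2"
  by (subst mat2_entries[of M]) (simp add: expiZ_def mat2_mult mult_exp_exp)

definition expiX :: "real \<Rightarrow> cmat2" where
  "expiX a = mat2 (complex_of_real (cos a)) (\<i> * complex_of_real (sin a))
                 (\<i> * complex_of_real (sin a)) (complex_of_real (cos a))"

definition hadamard :: cmat2 where
  "hadamard = (1 / sqrt 2) *\<^sub>R mat2 1 1 1 (- 1)"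

definition hadamard_conj :: "cmat2 \<Rightarrow> cmat2" where
  "hadamard_conj M = hadamard ** M ** hadamard"

lemma hadamard_eq:
  "hadamard = mat2 (1 / sqrt 2) (1 / sqrt 2) (1 / sqrt 2) (- 1 / sqrt 2)"
  unfolding hadamard_def scaleR_mat2 by (simp add: scaleR_conv_of_real)

lemma of_real_sqrt2_sq: "complex_of_real (sqrt 2) * complex_of_real (sqrt 2) = 2"
  by (simp flip: of_real_mult)

lemma hadamard_mult_hadamard: "hadamard ** hadamard = mat 1"
  by (simp add: hadamard_eq mat2_mult mat_1_eq_mat2 of_real_sqrt2_sq)

lemma hadamard_conj_mult: "hadamard_conj (A ** B) = hadamard_conj A ** hadamard_conj B"
proof -
  have "hadamard ** (A ** B) ** hadamard = hadamard ** A ** (hadamard ** hadamard) ** B ** hadamard"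
    by (simp add: hadamard_mult_hadamard matrix_mul_assoc)
  then show ?thesis
    by (simp add: hadamard_conj_def matrix_mul_assoc)
qed

lemma hadamard_conj_expiZ: "hadamard_conj (expiZ a) = expiX a"
proof -
  have "hadamard_conj (expiZ a) =
    mat2 ((exp (\<i> * a) + exp (- \<i> * a)) / 2) ((exp (\<i> * a) - exp (- \<i> * a)) / 2)
         ((exp (\<i> * a) - exp (- \<i> * a)) / 2) ((exp (\<i> * a) + exp (- \<i> * a)) / 2)"
    by (simp add: hadamard_conj_def hadamard_eq expiZ_def mat2_mult of_real_sqrt2_sq field_simps)
  then show ?thesis
    by (simp add: expiX_def exp_Euler exp_minus_Euler cos_of_real sin_of_real)
qed

lemma hadamard_conj_involution: "hadamard_conj (hadamard_conj M) = M"
  by (simp add: hadamard_conj_def matrix_mul_assoc hadamard_mult_hadamard)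
    (simp flip: matrix_mul_assoc add: hadamard_mult_hadamard)

lemma hadamard_conj_expiX: "hadamard_conj (expiX a) = expiZ a"
  by (metis hadamard_conj_expiZ hadamard_conj_involution)

lemma Wm_cos: assumes "0 \<le> t" "t \<le> pi / 2" shows "Wm (cos t) = expiX t"
proof -
  have "sin t \<ge> 0" using assms by (intro sin_ge_zero) auto
  then have "sqrt (1 - (cos t)\<^sup>2) = sin t" by (simp flip: sin_squared_eq)
  then show ?thesis by (simp add: Wm_def expiX_def)
qed

lemma hadamard_conj_Um_Suc:
  assumes "0 \<le> t" "t \<le> pi / 2"
  shows "hadamard_conj (Um Psi (Suc d) (cos t)) =
    expiX (Psi (Suc d)) ** expiZ t ** hadamard_conj (Um Psi d (cos t)) ** expiZ t ** expiX (Psi (Suc d))"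
  by (simp add: hadamard_conj_mult hadamard_conj_expiZ hadamard_conj_expiX Wm_cos[OF assms])

definition su2_form :: "cmat2 \<Rightarrow> bool" where
  "su2_form M \<longleftrightarrow> M$2$2 = cnj (M$1$1) \<and> M$2$1 = - cnj (M$1$2)"

lemma su2_form_iff: "su2_form M \<longleftrightarrow> M = mat2 (M$1$1) (M$1$2) (- cnj (M$1$2)) (cnj (M$1$1))"
  by (auto simp: su2_form_def vec_eq_iff forall_2 mat2_def)

lemma su2_form_mult: assumes "su2_form A" "su2_form B" shows "su2_form (A ** B)"
proof -
  have "su2_form (mat2 a b (- cnj b) (cnj a) ** mat2 c e (- cnj e) (cnj c))" for a b c e
    by (simp add: su2_form_def mat2_mult)
  then show ?thesis
    using assms unfolding su2_form_iff by metis
qed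

lemma su2_form_expiZ: "su2_form (expiZ a)"
  by (simp add: su2_form_def expiZ_def exp_cnj)

lemma su2_form_Wm: "su2_form (Wm x)"
  by (simp add: su2_form_def Wm_def)

lemma su2_form_Um: "su2_form (Um Psi d x)"
  by (induction d) (simp_all add: su2_form_mult su2_form_expiZ su2_form_Wm)

lemma transpose_Um: "transpose (Um Psi d x) = Um Psi d x"
  by (induction d) (simp_all add: matrix_transpose_mul expiZ_def Wm_def transpose_mat2 matrix_mul_assoc)

lemma hadamard_conj_symmetric_su2_form_entry_12:
  assumes "su2_form U" "transpose U = U"
  shows "hadamard_conj U $ 1 $ 2 = \<i> * Im (U $ 1 $ 1)"
proof -
  have "U $ 2 $ 1 = U $ 1 $ 2"
    using arg_cong[where f = "\<lambda>M. M $ 1 $ 2", OF assms(2)] by (simp add: transpose_def)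
  moreover have "U $ 2 $ 2 = cnj (U $ 1 $ 1)"
    using assms(1) by (simp add: su2_form_def)
  ultimately have "hadamard_conj U $ 1 $ 2 = (U$1$1 - cnj (U$1$1)) / 2"
    by (subst mat2_entries[of U]) (simp add: hadamard_conj_def hadamard_eq mat2_mult of_real_sqrt2_sq field_simps)
  then show ?thesis
    by (simp add: complex_eq_iff)
qed

lemma Im_u_entry_cos:
  assumes "0 \<le> t" "t \<le> pi / 2"
  shows "\<i> * Im (u_entry Psi d (cos t)) = hadamard_conj (Um Psi d (cos t)) $ 1 $ 2"
  by (simp add: u_entry_def hadamard_conj_symmetric_su2_form_entry_12 su2_form_Um transpose_Um)

lemma expiZ_conj_expiX:
  "expiZ a ** expiX p ** expiZ (- a) =
    mat2 (complex_of_real (cos p)) (\<i> * complex_of_real (sin p) * exp (2 * \<i> * complex_of_real a))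
         (\<i> * complex_of_real (sin p) * exp (- 2 * \<i> * complex_of_real a)) (complex_of_real (cos p))"
  by (simp add: expiZ_def expiX_def mat2_mult mult_exp_exp algebra_simps flip: exp_add)

lemma nlfs_factor_tan:
  assumes "\<bar>p\<bar> < pi / 2" "F k = \<i> * complex_of_real (tan p)"
  shows "nlfs_factor F (exp (2 * \<i> * t)) k = expiZ (k * t) ** expiX p ** expiZ (- (k * t))"
proof -
  have scale: "1 / sqrt (1 + (cmod (\<i> * complex_of_real (tan p)))\<^sup>2) = cos p"
    using cos_tan[OF assms(1)] by (simp add: norm_mult)
  have "cos p > 0"
    using assms(1) by (intro cos_gt_zero_pi) (auto simp: abs_less_iff)
  then have "cos p * tan p = sin p"
    by (simp add: tan_def)
  then have entry: "cos p * (\<i> * complex_of_real (tan p) * w) = \<i> * complex_of_real (sin p) * w" for w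
    by (simp add: mult.left_commute flip: of_real_mult)
  have "exp (2 * \<i> * t) powi k = exp (2 * \<i> * (k * t))"
    and "exp (2 * \<i> * t) powi (- k) = exp (- 2 * \<i> * (k * t))"
    by (simp_all add: exp_power_int mult_ac)
  then show ?thesis
    unfolding nlfs_factor_def assms(2) scale expiZ_conj_expiX scaleR_mat2
    by (simp add: entry scaleR_conv_of_real)
qed

lemma foldr_matrix_mult:
  "foldr (\<lambda>k M. f k ** M) ks (M :: 'a::semiring_1^'n^'n) = foldr (\<lambda>k M. f k ** M) ks (mat 1) ** M"
  by (induction ks) (simp_all add: matrix_mul_assoc)

lemma nlfs_window_Suc:
  "nlfs_window F (Suc N) z =
    nlfs_factor F z (- int (Suc N)) ** nlfs_window F N z ** nlfs_factor F z (int (Suc N))"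
proof -
  have "[- int (Suc N) .. int (Suc N)] = - int (Suc N) # [- int N .. int N] @ [int (Suc N)]"
    using upto_rec1[of "- int (Suc N)" "int (Suc N)"] upto_rec2[of "- int N" "int (Suc N)"] by simp
  then show ?thesis
    unfolding nlfs_window_def
    by (simp add: foldr_matrix_mult[where M = "nlfs_factor F z (1 + int N)"] matrix_mul_assoc)
qed

lemma nlfs_factor_zero: "F k = 0 \<Longrightarrow> nlfs_factor F z k = mat 1"
  by (simp add: nlfs_factor_def mat_1_eq_mat2)

lemma nlfs_eq_nlfs_window:
  assumes "\<And>k. F k \<noteq> 0 \<Longrightarrow> \<bar>k\<bar> \<le> int N"
  shows "nlfs F z = nlfs_window F N z"
proof -
  define L where "L = (LEAST N. \<forall>k. F k \<noteq> 0 \<longrightarrow> \<bar>k\<bar> \<le> int N)"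
  have supp_L: "\<bar>k\<bar> \<le> int L" if "F k \<noteq> 0" for k
    using LeastI[of "\<lambda>N. \<forall>k. F k \<noteq> 0 \<longrightarrow> \<bar>k\<bar> \<le> int N", OF allI[OF impI[OF assms]]] that
    unfolding L_def by blast
  have "L \<le> N"
    unfolding L_def by (rule Least_le) (use assms in blast)
  then have "nlfs_window F N z = nlfs_window F L z"
  proof (induction N rule: dec_induct)
    case (step M)
    then have "nlfs_factor F z (- int (Suc M)) = mat 1" "nlfs_factor F z (int (Suc M)) = mat 1"
      using supp_L by (force intro: nlfs_factor_zero)+
    with step show ?case
      by (simp only: nlfs_window_Suc matrix_mul_lid matrix_mul_rid)
  qed simp
  then show ?thesis
    by (simp add: nlfs_def L_def)
qed

lemma nlfs_window_tan:
  assumes "0 \<le> t" "t \<le> pi / 2" and "\<And>k. \<bar>Psi k\<bar> < pi / 2"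
    and "\<And>k. \<bar>k\<bar> \<le> int N \<Longrightarrow> F k = \<i> * complex_of_real (tan (Psi (nat \<bar>k\<bar>)))"
  shows "nlfs_window F N (exp (2 * \<i> * t)) =
    expiZ (- (real N * t)) ** hadamard_conj (Um Psi N (cos t)) ** expiZ (- (real N * t))"
  using assms(4)
proof (induction N)
  case 0
  then show ?case
    using nlfs_factor_tan[OF assms(3)[of 0], of F 0 t]
    by (simp add: nlfs_window_def expiZ_0 matrix_mul_lid matrix_mul_rid hadamard_conj_expiZ)
next
  case (Suc N)
  let ?X = "expiX (Psi (Suc N))" and ?C = "hadamard_conj (Um Psi N (cos t))" and ?a = "real (Suc N) * t"
  have "F (- int (Suc N)) = \<i> * complex_of_real (tan (Psi (Suc N)))"
    and "F (int (Suc N)) = \<i> * complex_of_real (tan (Psi (Suc N)))"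
    using Suc.prems[of "- int (Suc N)"] Suc.prems[of "int (Suc N)"] by (simp_all add: nat_add_distrib)
  then have "nlfs_factor F (exp (2 * \<i> * t)) (- int (Suc N)) = expiZ (- ?a) ** ?X ** expiZ ?a"
    and "nlfs_factor F (exp (2 * \<i> * t)) (int (Suc N)) = expiZ ?a ** ?X ** expiZ (- ?a)"
    using nlfs_factor_tan[OF assms(3)[of "Suc N"], of F _ t] by (simp_all only: of_int_of_nat_eq of_int_minus mult_minus_left minus_minus)
  moreover have "nlfs_window F N (exp (2 * \<i> * t)) = expiZ (- (real N * t)) ** ?C ** expiZ (- (real N * t))"
    using Suc by simp
  ultimately have "nlfs_window F (Suc N) (exp (2 * \<i> * t)) =
      (expiZ (- ?a) ** ?X ** expiZ ?a) ** (expiZ (- (real N * t)) ** ?C ** expiZ (- (real N * t)))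
        ** (expiZ ?a ** ?X ** expiZ (- ?a))"
    by (simp only: nlfs_window_Suc)
  also have "\<dots> = expiZ (- ?a) ** (?X ** expiZ t ** ?C ** expiZ t ** ?X) ** expiZ (- ?a)"
    by (simp add: matrix_mul_assoc matrix_mul_expiZ_expiZ ring_distribs)
  also have "\<dots> = expiZ (- ?a) ** hadamard_conj (Um Psi (Suc N) (cos t)) ** expiZ (- ?a)"
    by (simp only: hadamard_conj_Um_Suc[OF assms(1,2)])
  finally show ?case .
qed

theorem lemma4p2:
  fixes Psi :: "nat \<Rightarrow> real" and d :: nat and x theta :: real
  assumes "\<And>k. - (pi / 2) < Psi k \<and> Psi k < pi / 2"
    and "d \<ge> 1"
    and "0 \<le> x" and "x \<le> 1"
    and "0 \<le> theta" and "theta \<le> pi / 2" and "cos theta = x"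
  shows "\<i> * complex_of_real (Im (u_entry Psi d x))
       = nlfs (\<lambda>n. if - int d \<le> n \<and> n \<le> int d then \<i> * complex_of_real (tan (Psi (nat \<bar>n\<bar>))) else 0)
              (exp (2 * \<i> * complex_of_real theta)) $ 1 $ 2"
proof -
  define F where "F = (\<lambda>n. if - int d \<le> n \<and> n \<le> int d then \<i> * complex_of_real (tan (Psi (nat \<bar>n\<bar>))) else 0)"
  have "\<bar>k\<bar> \<le> int d" if "F k \<noteq> 0" for k
    using that by (auto simp: F_def split: if_splits)
  then have "nlfs F (exp (2 * \<i> * theta)) = nlfs_window F d (exp (2 * \<i> * theta))"
    by (rule nlfs_eq_nlfs_window)
  also have "\<dots> = expiZ (- (real d * theta)) ** hadamard_conj (Um Psi d (cos theta)) ** expiZ (- (real d * theta))"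
  proof (rule nlfs_window_tan[OF assms(5,6)])
    show "\<bar>Psi k\<bar> < pi / 2" for k
      using assms(1)[of k] unfolding abs_less_iff by linarith
    show "F k = \<i> * complex_of_real (tan (Psi (nat \<bar>k\<bar>)))" if "\<bar>k\<bar> \<le> int d" for k
      using that by (simp add: F_def abs_le_iff)
  qed
  finally have "nlfs F (exp (2 * \<i> * theta)) $ 1 $ 2 = hadamard_conj (Um Psi d (cos theta)) $ 1 $ 2"
    by (simp add: expiZ_sandwich_entry_12)
  also have "\<dots> = \<i> * Im (u_entry Psi d x)"
    using Im_u_entry_cos[OF assms(5,6)] assms(7) by simp
  finally show ?thesis
    unfolding F_def by (rule sym)
qed

end
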